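(* Let $f\in\mathcal{K}$ have radius of convergence $R>0$ and fulcrum $F$. Assume that $f$ is Gaussian and that for some even integer $n\ge4$, $$\limsup_{s\uparrow\ln R}\frac{|F^{(j)}(s)|}{F''(s)^{j/2}}<+\infty\quad\text{for every }3\le j\le n.$$ Then $$\lim_{s\uparrow\ln R}\frac{F^{(j)}(s)}{F''(s)^{j/2}}=0\quad\text{for every }3\le j<n.$$
   Context: The class $\mathcal{K}$ consists of non-constant power series $f(z)=\sum_{n\ge0}a_nz^n$ with radius of convergence $R\in(0,+\infty]$, with $a_n\ge 0$ for all $n$ and $a_0>0$. For $t\in(0,R)$, $X_t$ is the random variable with $\mathbf{P}(X_t=n)=a_nt^n/f(t)$, $n\ge0$. Write $m_f(t)=\mathbf{E}(X_t)$, $\sigma_f^2(t)=\mathbf{V}(X_t)>0$ and $\breve{X}_t=(X_t-m_f(t))/\sigma_f(t)$. $f$ is called Gaussian if $\breve{X}_t$ converges in distribution to a standard normal random variable as $t\uparrow R$. The fulcrum of $f$ is $F(s)=\ln f(e^s)$ for real $s<\ln R$ (with $\ln R=+\infty$ if $R=+\infty$); $F''(s)=\sigma_f^2(e^s)$. *)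

theory Defs
  imports "HOL-Probability.Probability"
begin

text \<open>A power series f(z) = sum a_n z^n is represented by its coefficient sequence a.\<close>

definition classK :: "(nat \<Rightarrow> real) \<Rightarrow> bool" where
  "classK a \<longleftrightarrow> (\<forall>n. a n \<ge> 0) \<and> a 0 > 0 \<and> (\<exists>n>0. a n \<noteq> 0) \<and> conv_radius a > 0"

definition psum :: "(nat \<Rightarrow> real) \<Rightarrow> real \<Rightarrow> real" where
  "psum a t = (\<Sum>n. a n * t ^ n)"

definition up_to_R :: "ereal \<Rightarrow> real filter" where
  "up_to_R R = (if R = \<infinity> then at_top else at_left (real_of_ereal R))"

definition up_to_lnR :: "ereal \<Rightarrow> real filter" where
  "up_to_lnR R = (if R = \<infinity> then at_top else at_left (ln (real_of_ereal R)))"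

text \<open>Mean and variance of X_t, where P(X_t = n) = a_n t^n / f(t).\<close>
definition mean_f :: "(nat \<Rightarrow> real) \<Rightarrow> real \<Rightarrow> real" where
  "mean_f a t = (\<Sum>n. real n * a n * t ^ n) / psum a t"

definition var_f :: "(nat \<Rightarrow> real) \<Rightarrow> real \<Rightarrow> real" where
  "var_f a t = (\<Sum>n. (real n - mean_f a t)\<^sup>2 * a n * t ^ n) / psum a t"

definition cdf_normalized :: "(nat \<Rightarrow> real) \<Rightarrow> real \<Rightarrow> real \<Rightarrow> real" where
  "cdf_normalized a t x =
     (\<Sum>n. (if (real n - mean_f a t) / sqrt (var_f a t) \<le> x then a n * t ^ n else 0)) / psum a t"

definition Phi :: "real \<Rightarrow> real" where
  "Phi x = (LINT y:{..x}|lborel. std_normal_density y)"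

text \<open>Gaussian: the normalized X_t converges in distribution to N(0,1) as t increases to R;
  since the limit distribution function is continuous, this is pointwise convergence of
  distribution functions at every x.\<close>
definition gaussian :: "(nat \<Rightarrow> real) \<Rightarrow> bool" where
  "gaussian a \<longleftrightarrow> (\<forall>x. ((\<lambda>t. cdf_normalized a t x) \<longlongrightarrow> Phi x) (up_to_R (conv_radius a)))"

definition fulcrum :: "(nat \<Rightarrow> real) \<Rightarrow> real \<Rightarrow> real" where
  "fulcrum a s = ln (psum a (exp s))"

end

theory Submission
  imports Defs
begin

(* The derivatives F^(j)(s) are the cumulants of X_t, t = e^s. Differentiating the moment sums of
   X_t in s shows that the standardized central moments nu_k of X_t obey
     nu_(k+1) = sum_(i=1..k) (k choose i) kappa_(i+1) nu_(k-i),
   where kappa_j = F^(j) / (F'')^(j/2) is the standardized cumulant (kappa_2 = 1). Bounded kappa_3,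
   ..., kappa_n therefore give bounded nu_0, ..., nu_n. Since f is Gaussian, the standardized
   variables converge weakly to N(0,1), and the bound on the even moment nu_n upgrades this to
   convergence of nu_k to the normal moments for k < n. The normal moments satisfy the same
   recursion with kappa_j = 0 for j >= 3; solving the recursion for its last term
   kappa_(k+1) nu_0 shows by induction on j that kappa_j tends to 0 for 3 <= j < n. *)

section \<open>Higher derivatives on open sets\<close>

fun higher_differentiable_on :: "nat \<Rightarrow> real set \<Rightarrow> (real \<Rightarrow> real) \<Rightarrow> bool" where
  "higher_differentiable_on 0 S f \<longleftrightarrow> True"
| "higher_differentiable_on (Suc k) S f \<longleftrightarrow>
     (\<forall>x\<in>S. (f has_real_derivative deriv f x) (at x)) \<and> higher_differentiable_on k S (deriv f)"

lemma higher_differentiable_on_cong: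
  assumes "open S" "higher_differentiable_on k S f" "\<And>x. x \<in> S \<Longrightarrow> f x = g x"
  shows "higher_differentiable_on k S g"
  using assms(2,3)
proof (induction k arbitrary: f g)
  case (Suc k)
  have g': "(g has_real_derivative deriv f x) (at x)" if "x \<in> S" for x
    using Suc.prems that assms(1) by (auto intro: has_field_derivative_transform_within_open)
  then have "deriv g x = deriv f x" if "x \<in> S" for x
    using that by (simp add: DERIV_imp_deriv)
  with Suc g' show ?case by auto
qed simp

lemma higher_differentiable_on_SucD:
  "higher_differentiable_on (Suc k) S f \<Longrightarrow> higher_differentiable_on k S f"
  by (induction k arbitrary: f) auto

lemma higher_differentiable_on_const: "higher_differentiable_on k S (\<lambda>x. c)"
proof (induction k arbitrary: c)
  case (Suc k)
  have "deriv (\<lambda>x. c) = (\<lambda>x. 0)" by (rule ext) simp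
  with Suc show ?case by simp
qed simp

lemma higher_differentiable_on_add:
  assumes "open S" "higher_differentiable_on k S f" "higher_differentiable_on k S g"
  shows "higher_differentiable_on k S (\<lambda>x. f x + g x)"
  using assms(2,3)
proof (induction k arbitrary: f g)
  case (Suc k)
  have d: "((\<lambda>x. f x + g x) has_real_derivative deriv f x + deriv g x) (at x)" if "x \<in> S" for x
    using Suc.prems that by (auto intro!: derivative_eq_intros)
  have "higher_differentiable_on k S (\<lambda>x. deriv f x + deriv g x)"
    using Suc by auto
  then have "higher_differentiable_on k S (deriv (\<lambda>x. f x + g x))"
    by (rule higher_differentiable_on_cong[OF \<open>open S\<close>]) (simp add: DERIV_imp_deriv[OF d])
  with d show ?case by (auto simp: DERIV_imp_deriv[OF d] intro: d)
qed simp

lemma higher_differentiable_on_mult: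
  assumes "open S" "higher_differentiable_on k S f" "higher_differentiable_on k S g"
  shows "higher_differentiable_on k S (\<lambda>x. f x * g x)"
  using assms(2,3)
proof (induction k arbitrary: f g)
  case (Suc k)
  have d: "((\<lambda>x. f x * g x) has_real_derivative deriv f x * g x + f x * deriv g x) (at x)"
    if "x \<in> S" for x
    using Suc.prems that by (auto intro!: derivative_eq_intros)
  have "higher_differentiable_on k S f" "higher_differentiable_on k S g"
    using Suc.prems by (auto intro: higher_differentiable_on_SucD)
  with Suc have "higher_differentiable_on k S (\<lambda>x. deriv f x * g x + f x * deriv g x)"
    by (intro higher_differentiable_on_add[OF \<open>open S\<close>]) auto
  then have "higher_differentiable_on k S (deriv (\<lambda>x. f x * g x))"
    by (rule higher_differentiable_on_cong[OF \<open>open S\<close>]) (simp add: DERIV_imp_deriv[OF d])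
  with d show ?case by (auto simp: DERIV_imp_deriv[OF d] intro: d)
qed simp

lemma higher_differentiable_on_inverse:
  assumes "open S" "higher_differentiable_on k S g" "\<And>x. x \<in> S \<Longrightarrow> g x \<noteq> 0"
  shows "higher_differentiable_on k S (\<lambda>x. 1 / g x)"
  using assms(2)
proof (induction k)
  case (Suc k)
  have d: "((\<lambda>x. 1 / g x) has_real_derivative - deriv g x * (1 / g x) * (1 / g x)) (at x)"
    if "x \<in> S" for x
    using Suc.prems that assms(3)[OF that]
    by (auto intro!: derivative_eq_intros simp: power2_eq_square field_simps)
  have "higher_differentiable_on k S (\<lambda>x. - deriv g x)"
    using higher_differentiable_on_mult[OF \<open>open S\<close>, of k "\<lambda>x. -1" "deriv g"] Suc.prems
    by (simp add: higher_differentiable_on_const)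
  moreover have "higher_differentiable_on k S (\<lambda>x. 1 / g x)"
    using Suc.IH higher_differentiable_on_SucD[OF Suc.prems] by blast
  ultimately have "higher_differentiable_on k S (\<lambda>x. - deriv g x * (1 / g x) * (1 / g x))"
    by (intro higher_differentiable_on_mult[OF \<open>open S\<close>])
  then have "higher_differentiable_on k S (deriv (\<lambda>x. 1 / g x))"
    by (rule higher_differentiable_on_cong[OF \<open>open S\<close>]) (simp add: DERIV_imp_deriv[OF d])
  with d show ?case by (auto simp: DERIV_imp_deriv[OF d] intro: d)
qed simp

lemma higher_differentiable_on_ln:
  assumes "open S" "higher_differentiable_on k S g" "\<And>x. x \<in> S \<Longrightarrow> g x > 0"
  shows "higher_differentiable_on k S (\<lambda>x. ln (g x))"
proof (cases k)
  case (Suc k')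
  have d: "((\<lambda>x. ln (g x)) has_real_derivative deriv g x * (1 / g x)) (at x)" if "x \<in> S" for x
    using assms Suc that by (auto intro!: derivative_eq_intros simp: field_simps)
  have "higher_differentiable_on k' S (\<lambda>x. deriv g x * (1 / g x))"
    using assms Suc higher_differentiable_on_SucD[of k' S g]
    by (intro higher_differentiable_on_mult higher_differentiable_on_inverse)
       (auto dest: higher_differentiable_on_SucD less_imp_neq[symmetric])
  then have "higher_differentiable_on k' S (deriv (\<lambda>x. ln (g x)))"
    by (rule higher_differentiable_on_cong[OF \<open>open S\<close>]) (simp add: DERIV_imp_deriv[OF d])
  with d Suc show ?thesis by (auto simp: DERIV_imp_deriv[OF d] intro: d)
qed simp

lemma higher_differentiable_on_derivative_sequence:
  assumes "open S" "\<And>j x. x \<in> S \<Longrightarrow> (G j has_real_derivative G (Suc j) x) (at x)"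
  shows "higher_differentiable_on k S (G 0)"
  using assms(2)
proof (induction k arbitrary: G)
  case (Suc k)
  have "higher_differentiable_on k S (G 1)"
    using Suc.IH[of "\<lambda>j. G (Suc j)"] Suc.prems by simp
  then have "higher_differentiable_on k S (deriv (G 0))"
    by (rule higher_differentiable_on_cong[OF \<open>open S\<close>]) (simp add: DERIV_imp_deriv[OF Suc.prems])
  with Suc.prems show ?case by (simp add: DERIV_imp_deriv[OF Suc.prems])
qed simp

lemma has_real_derivative_higher_deriv:
  assumes "\<And>k. higher_differentiable_on k S f" "x \<in> S"
  shows "((deriv ^^ k) f has_real_derivative (deriv ^^ Suc k) f x) (at x)"
  using assms(1)
proof (induction k arbitrary: f)
  case 0
  then show ?case using assms(2) higher_differentiable_on.simps(2)[of 0 S f] by simp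
next
  case (Suc k)
  then have "((deriv ^^ k) (deriv f) has_real_derivative (deriv ^^ Suc k) (deriv f) x) (at x)"
    by (metis higher_differentiable_on.simps(2))
  then show ?case by (simp only: funpow_Suc_right o_apply)
qed

lemma Leibniz_derivative_sequence:
  assumes "open S" "x \<in> S"
    and dA: "\<And>j x. x \<in> S \<Longrightarrow> (A j has_real_derivative A (Suc j) x) (at x)"
    and dB: "\<And>j x. x \<in> S \<Longrightarrow> (B j has_real_derivative B (Suc j) x) (at x)"
    and dC: "\<And>j x. x \<in> S \<Longrightarrow> (C j has_real_derivative C (Suc j) x) (at x)"
    and C0: "\<And>x. x \<in> S \<Longrightarrow> C 0 x = A 0 x * B 0 x"
  shows "C k x = (\<Sum>i\<le>k. real (k choose i) * A i x * B (k - i) x)"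
  using \<open>x \<in> S\<close>
proof (induction k arbitrary: x)
  case 0
  then show ?case using C0 by simp
next
  case (Suc k)
  let ?R = "\<lambda>x. \<Sum>i\<le>k. real (k choose i) * A i x * B (k - i) x"
  let ?D = "\<Sum>i\<le>k. real (k choose i) * (A (Suc i) x * B (k - i) x + A i x * B (Suc (k - i)) x)"
  have "(?R has_real_derivative ?D) (at x)"
    by (rule derivative_eq_intros refl dA dB Suc.prems | simp add: algebra_simps)+
  moreover have "(?R has_real_derivative C (Suc k) x) (at x)"
    using dC[OF Suc.prems, of k] \<open>open S\<close> Suc.prems Suc.IH
    by (rule has_field_derivative_transform_within_open)
  ultimately have "C (Suc k) x = ?D"
    by (rule DERIV_unique[symmetric])
  also have "\<dots> = (\<Sum>i\<le>Suc k. real (Suc k choose i) * A i x * B (Suc k - i) x)"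
    \<comment> \<open>Pascal's rule, after shifting the index of the first half of the sum\<close>
  proof -
    have "(\<Sum>i\<le>k. real (k choose i) * A i x * B (Suc (k - i)) x)
        = (\<Sum>i\<le>Suc k. real (k choose i) * A i x * B (Suc k - i) x)"
      by (simp add: Suc_diff_le)
    also have "\<dots> = A 0 x * B (Suc k) x
        + (\<Sum>i\<le>k. real (k choose Suc i) * A (Suc i) x * B (k - i) x)"
      by (subst sum.atMost_Suc_shift) simp
    finally have shifted: "(\<Sum>i\<le>k. real (k choose i) * A i x * B (Suc (k - i)) x) = \<dots>" .
    have "(\<Sum>i\<le>Suc k. real (Suc k choose i) * A i x * B (Suc k - i) x)
        = A 0 x * B (Suc k) x
          + (\<Sum>i\<le>k. real (k choose i) * A (Suc i) x * B (k - i) x)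
          + (\<Sum>i\<le>k. real (k choose Suc i) * A (Suc i) x * B (k - i) x)"
      by (subst sum.atMost_Suc_shift) (simp add: algebra_simps sum.distrib)
    then show ?thesis
      using shifted by (simp add: algebra_simps sum.distrib sum_distrib_left)
  qed
  finally show ?case .
qed

lemma Bfun_transform_eventually:
  fixes f g :: "'a \<Rightarrow> 'b::real_normed_vector"
  assumes "Bfun f F" "eventually (\<lambda>x. f x = g x) F"
  shows "Bfun g F"
proof -
  obtain B where "eventually (\<lambda>x. norm (f x) \<le> B) F"
    using assms(1) by (auto elim: BfunE)
  with assms(2) have "eventually (\<lambda>x. norm (g x) \<le> B) F"
    by eventually_elim simp
  then show ?thesis by (rule BfunI)
qed

lemma Bfun_add:
  fixes f g :: "'a \<Rightarrow> 'b::real_normed_vector"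
  assumes "Bfun f F" "Bfun g F"
  shows "Bfun (\<lambda>x. f x + g x) F"
proof -
  obtain B C where "eventually (\<lambda>x. norm (f x) \<le> B) F" "eventually (\<lambda>x. norm (g x) \<le> C) F"
    using assms by (auto elim!: BfunE)
  then have "eventually (\<lambda>x. norm (f x + g x) \<le> B + C) F"
    by eventually_elim (rule norm_triangle_le, simp)
  then show ?thesis by (rule BfunI)
qed

lemma Bfun_mult:
  fixes f g :: "'a \<Rightarrow> 'b::real_normed_algebra"
  assumes "Bfun f F" "Bfun g F"
  shows "Bfun (\<lambda>x. f x * g x) F"
proof -
  obtain B C where "eventually (\<lambda>x. norm (f x) \<le> B) F" "eventually (\<lambda>x. norm (g x) \<le> C) F"
    using assms by (auto elim!: BfunE)
  then have "eventually (\<lambda>x. norm (f x * g x) \<le> B * C) F"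
    by eventually_elim (metis norm_mult_ineq mult_mono norm_ge_zero order_trans)
  then show ?thesis by (rule BfunI)
qed

lemma Bfun_sum:
  fixes f :: "'i \<Rightarrow> 'a \<Rightarrow> 'b::real_normed_vector"
  assumes "\<And>i. i \<in> A \<Longrightarrow> Bfun (f i) F"
  shows "Bfun (\<lambda>x. \<Sum>i\<in>A. f i x) F"
proof (cases "finite A")
  case True
  then show ?thesis using assms
    by (induction A rule: finite_induct) (auto intro: Bfun_add)
qed simp

lemma Bfun_if_Limsup_abs_less_infinity:
  fixes f :: "'a \<Rightarrow> real"
  assumes "Limsup F (\<lambda>x. ereal \<bar>f x\<bar>) < \<infinity>"
  shows "Bfun f F"
proof -
  obtain B where "Limsup F (\<lambda>x. ereal \<bar>f x\<bar>) < ereal B"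
    using ereal_dense2[OF assms] by auto
  then have "eventually (\<lambda>x. norm (f x) \<le> B) F"
    by (rule Limsup_lessD[THEN eventually_mono]) simp
  then show ?thesis by (rule BfunI)
qed

section \<open>Convergence of moments\<close>

lemma power_clamp_approx:
  fixes x T :: real
  assumes "T \<ge> 1" "even n" "k < n"
  shows "\<bar>x ^ k - max (- T) (min T x) ^ k\<bar> \<le> 2 * x ^ n / T ^ (n - k)"
proof (cases "\<bar>x\<bar> \<le> T")
  case True
  then have "max (- T) (min T x) = x" by auto
  then show ?thesis using assms by (simp add: zero_le_even_power)
next
  case False
  have xn: "x ^ n = \<bar>x\<bar> ^ n" using \<open>even n\<close> by (simp add: power_even_abs)
  have "\<bar>x ^ k - max (- T) (min T x) ^ k\<bar> \<le> \<bar>x\<bar> ^ k + \<bar>max (- T) (min T x)\<bar> ^ k"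
    by (metis abs_triangle_ineq4 power_abs)
  also have "\<dots> \<le> 2 * \<bar>x\<bar> ^ k"
    using False assms(1) power_mono[of "\<bar>max (- T) (min T x)\<bar>" "\<bar>x\<bar>" k] by auto
  also have "\<dots> \<le> 2 * x ^ n / T ^ (n - k)"
  proof -
    have "\<bar>x\<bar> ^ k * T ^ (n - k) \<le> \<bar>x\<bar> ^ k * \<bar>x\<bar> ^ (n - k)"
      using False assms(1) by (intro mult_left_mono power_mono) auto
    also have "\<dots> = x ^ n"
      using \<open>k < n\<close> xn by (simp flip: power_add)
    finally show ?thesis using assms(1) by (simp add: field_simps)
  qed
  finally show ?thesis .
qed

lemma integrable_power_le_even_power:
  assumes "real_distribution P" "even n" "k \<le> n" "integrable P (\<lambda>x. x ^ n)"
  shows "integrable P (\<lambda>x::real. x ^ k)"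
proof -
  interpret P: real_distribution P by fact
  have "integrable P (\<lambda>x. 1 + x ^ n)"
    using assms(4) by (intro Bochner_Integration.integrable_add) auto
  then show ?thesis
  proof (rule Bochner_Integration.integrable_bound)
    show "AE x in P. norm (x ^ k) \<le> norm (1 + x ^ n)"
    proof (intro AE_I2)
      fix x :: real
      have "\<bar>x\<bar> ^ k \<le> 1 + \<bar>x\<bar> ^ n"
      proof (cases "\<bar>x\<bar> \<le> 1")
        case True
        then have "\<bar>x\<bar> ^ k \<le> 1" by (simp add: power_le_one)
        then show ?thesis by (smt (verit) zero_le_power abs_ge_zero)
      next
        case False
        then have "\<bar>x\<bar> ^ k \<le> \<bar>x\<bar> ^ n" using \<open>k \<le> n\<close> by (intro power_increasing) auto
        then show ?thesis by simp
      qed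
      then show "norm (x ^ k) \<le> norm (1 + x ^ n)"
        using \<open>even n\<close> by (simp add: power_abs power_even_abs)
    qed
  qed simp
qed

lemma integral_power_clamp_approx:
  assumes P: "real_distribution P" and "even n" "k < n" "T \<ge> 1"
    and int_n: "integrable P (\<lambda>x. x ^ n)"
  shows "\<bar>integral\<^sup>L P (\<lambda>x::real. x ^ k) - integral\<^sup>L P (\<lambda>x. max (- T) (min T x) ^ k)\<bar>
          \<le> 2 / T ^ (n - k) * integral\<^sup>L P (\<lambda>x. x ^ n)"
proof -
  interpret P: real_distribution P by fact
  let ?h = "\<lambda>x::real. max (- T) (min T x) ^ k"
  have int_k: "integrable P (\<lambda>x::real. x ^ k)"
    using integrable_power_le_even_power[OF P \<open>even n\<close> _ int_n, of k] \<open>k < n\<close> by simp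
  have int_h: "integrable P ?h"
  proof (rule Bochner_Integration.integrable_bound)
    show "integrable P (\<lambda>x. T ^ k)" by simp
    show "AE x in P. norm (?h x) \<le> norm (T ^ k)"
    proof (intro AE_I2)
      fix x :: real
      have "\<bar>max (- T) (min T x)\<bar> ^ k \<le> T ^ k"
        using \<open>T \<ge> 1\<close> by (intro power_mono) auto
      then show "norm (?h x) \<le> norm (T ^ k)"
        using \<open>T \<ge> 1\<close> by (simp add: power_abs)
    qed
  qed simp
  have "\<bar>integral\<^sup>L P (\<lambda>x. x ^ k) - integral\<^sup>L P ?h\<bar> = \<bar>integral\<^sup>L P (\<lambda>x. x ^ k - ?h x)\<bar>"
    using int_k int_h by (simp add: Bochner_Integration.integral_diff)
  also have "\<dots> \<le> integral\<^sup>L P (\<lambda>x. \<bar>x ^ k - ?h x\<bar>)"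
    by (rule integral_abs_bound)
  also have "\<dots> \<le> integral\<^sup>L P (\<lambda>x. 2 / T ^ (n - k) * x ^ n)"
    using int_k int_h int_n power_clamp_approx[OF \<open>T \<ge> 1\<close> \<open>even n\<close> \<open>k < n\<close>]
    by (intro Bochner_Integration.integral_mono)
       (auto intro!: integrable_abs Bochner_Integration.integrable_diff)
  finally show ?thesis by simp
qed

text \<open>Truncating \<open>x ^ k\<close> at level \<open>T\<close> turns it into a bounded continuous function, at a cost
  of at most \<open>2 / T ^ (n - k)\<close> times the \<open>n\<close>-th moment, which is uniformly bounded.\<close>

lemma weak_conv_imp_moment_conv:
  fixes M :: "nat \<Rightarrow> real measure" and N :: "real measure"
  assumes distr: "\<And>i. real_distribution (M i)" and distr_N: "real_distribution N"
    and conv: "weak_conv_m M N" and "even n" "k < n"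
    and int_M: "\<And>i. integrable (M i) (\<lambda>x. x ^ n)" and int_N: "integrable N (\<lambda>x. x ^ n)"
    and bound: "eventually (\<lambda>i. integral\<^sup>L (M i) (\<lambda>x. x ^ n) \<le> B) sequentially"
  shows "(\<lambda>i. integral\<^sup>L (M i) (\<lambda>x. x ^ k)) \<longlonglongrightarrow> integral\<^sup>L N (\<lambda>x. x ^ k)"
proof (rule tendstoI)
  fix e :: real assume "e > 0"
  interpret N: real_distribution N by fact
  define C where "C = max B 0 + integral\<^sup>L N (\<lambda>x. x ^ n)"
  have "C \<ge> 0"
    using \<open>even n\<close> by (auto simp: C_def zero_le_even_power intro!: add_nonneg_nonneg)
  define T where "T = max 1 (6 * C / e + 1)"
  have "T \<ge> 1" by (simp add: T_def)
  have "T ^ 1 \<le> T ^ (n - k)"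
    using \<open>T \<ge> 1\<close> \<open>k < n\<close> by (intro power_increasing) auto
  then have "6 * C / e < T ^ (n - k)" by (simp add: T_def)
  then have small: "2 / T ^ (n - k) * C < e / 3"
    using \<open>e > 0\<close> \<open>T \<ge> 1\<close> by (simp add: field_simps)
  let ?h = "\<lambda>x::real. max (- T) (min T x) ^ k"
  have h_bound: "norm (?h x) \<le> T ^ k" for x
    using \<open>T \<ge> 1\<close> power_mono[of "\<bar>max (- T) (min T x)\<bar>" T k] by (auto simp: power_abs)
  have "(\<lambda>i. integral\<^sup>L (M i) ?h) \<longlonglongrightarrow> integral\<^sup>L N ?h"
    by (rule weak_conv_imp_integral_bdd_continuous_conv[OF distr distr_N conv _ h_bound])
      (intro continuous_intros)
  then have "eventually (\<lambda>i. \<bar>integral\<^sup>L (M i) ?h - integral\<^sup>L N ?h\<bar> < e / 3) sequentially"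
    using \<open>e > 0\<close> by (auto dest!: tendstoD[of _ _ _ "e / 3"] simp: dist_real_def)
  with bound show "eventually (\<lambda>i. dist (integral\<^sup>L (M i) (\<lambda>x. x ^ k)) (integral\<^sup>L N (\<lambda>x. x ^ k)) < e)
    sequentially"
  proof eventually_elim
    case (elim i)
    define c where "c = 2 / T ^ (n - k)"
    have "c \<ge> 0" using \<open>T \<ge> 1\<close> by (simp add: c_def)
    then have "c * integral\<^sup>L (M i) (\<lambda>x. x ^ n) + c * integral\<^sup>L N (\<lambda>x. x ^ n) \<le> c * C"
      unfolding C_def distrib_left[symmetric] using elim(1) by (intro mult_left_mono) auto
    moreover note small elim(2)
      integral_power_clamp_approx[OF distr \<open>even n\<close> \<open>k < n\<close> \<open>T \<ge> 1\<close> int_M, of i]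
      integral_power_clamp_approx[OF distr_N \<open>even n\<close> \<open>k < n\<close> \<open>T \<ge> 1\<close> int_N]
    ultimately show ?case
      unfolding dist_real_def c_def[symmetric] by linarith
  qed
qed

lemma cdf_std_normal_distribution: "cdf std_normal_distribution x = Phi x"
proof -
  have "cdf std_normal_distribution x = integral\<^sup>L std_normal_distribution (indicator {..x})"
    by (simp add: cdf_def)
  also have "\<dots> = Phi x"
    by (subst integral_density)
       (auto simp: normal_density_nonneg Phi_def set_lebesgue_integral_def mult.commute)
  finally show ?thesis .
qed

lemma std_normal_moment_Suc:
  assumes "k \<ge> 1"
  shows "integral\<^sup>L std_normal_distribution (\<lambda>x. x ^ Suc k) =
         real k * integral\<^sup>L std_normal_distribution (\<lambda>x. x ^ (k - 1))"
proof (cases "even k")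
  case True
  with assms have odd: "odd (Suc k)" "odd (k - 1)" by auto
  show ?thesis
    by (simp only: integral_std_normal_distribution_moment_odd[OF odd(1)]
        integral_std_normal_distribution_moment_odd[OF odd(2)] mult_zero_right)
next
  case False
  then obtain q where q: "k = 2 * q + 1" by (metis oddE)
  then have k: "Suc k = 2 * Suc q" "k - 1 = 2 * q" by simp_all
  have ratio: "fact (2 * Suc q) / (2 ^ Suc q * fact (Suc q))
      = real (2 * q + 1) * (fact (2 * q) / (2 ^ q * fact q) :: real)"
  proof -
    have num: "fact (2 * Suc q) = 2 * real (Suc q) * (real (2 * q + 1) * fact (2 * q) :: real)"
      by (simp add: fact_Suc algebra_simps)
    have den: "2 ^ Suc q * fact (Suc q) = 2 * real (Suc q) * (2 ^ q * fact q :: real)"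
      by (simp add: fact_Suc algebra_simps)
    show ?thesis
      unfolding num den by (subst nonzero_mult_divide_mult_cancel_left) simp_all
  qed
  show ?thesis
    unfolding k std_normal_distribution_even_moments(1) ratio using q by simp
qed

section \<open>Power series in \<open>exp s\<close>\<close>

lemma conv_radius_le_conv_radius_mult_of_nat:
  fixes c :: "nat \<Rightarrow> real"
  shows "conv_radius c \<le> conv_radius (\<lambda>n. of_nat n * c n)"
proof (rule conv_radius_geI_ex')
  fix r :: real assume r: "0 < r" "ereal r < conv_radius c"
  obtain K where K: "r < K" "ereal K < conv_radius c"
    using ereal_dense2[OF r(2)] by auto
  have "summable (\<lambda>n. c n * x ^ n)" if "norm x < K" for x :: real
    using that by (intro summable_in_conv_radius less_trans[OF _ K(2)]) simp
  then have "summable (\<lambda>n. diffs c n * r ^ n)"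
    using K r by (intro termdiff_converges[of r K]) auto
  then have "(\<lambda>n. of_nat n * c n * r ^ (n - Suc 0) * r) sums ((\<Sum>n. diffs c n * r ^ n) * r)"
    by (intro sums_mult2 diffs_equiv)
  moreover have "of_nat n * c n * r ^ (n - Suc 0) * r = of_nat n * c n * r ^ n" for n
    by (cases n) simp_all
  ultimately show "summable (\<lambda>n. of_nat n * c n * of_real r ^ n)"
    by (simp add: sums_summable)
qed

lemma conv_radius_le_conv_radius_mult_power_of_nat:
  fixes c :: "nat \<Rightarrow> real"
  shows "conv_radius c \<le> conv_radius (\<lambda>n. of_nat n ^ j * c n)"
proof (induction j)
  case (Suc j)
  also have "conv_radius (\<lambda>n. of_nat n ^ j * c n) \<le> conv_radius (\<lambda>n. of_nat n * (of_nat n ^ j * c n))"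
    by (rule conv_radius_le_conv_radius_mult_of_nat)
  finally show ?case by (simp add: mult.assoc)
qed simp

lemma abs_summable_shifted_power_series:
  fixes a :: "nat \<Rightarrow> real"
  assumes "ereal \<bar>z\<bar> < conv_radius a"
  shows "summable (\<lambda>n. \<bar>(real n - c) ^ j * a n * z ^ n\<bar>)"
proof (rule summable_comparison_test)
  have "summable (\<lambda>n. norm (real n ^ i * a n * z ^ n))" for i
    using assms conv_radius_le_conv_radius_mult_power_of_nat[of a i]
    by (intro abs_summable_in_conv_radius) simp
  from this[of j] this[of 0]
  show "summable (\<lambda>n. 2 ^ j * \<bar>real n ^ j * a n * z ^ n\<bar> + 2 ^ j * \<bar>c\<bar> ^ j * \<bar>a n * z ^ n\<bar>)"
    by (intro summable_add summable_mult) auto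
  show "\<exists>N. \<forall>n\<ge>N. norm \<bar>(real n - c) ^ j * a n * z ^ n\<bar>
      \<le> 2 ^ j * \<bar>real n ^ j * a n * z ^ n\<bar> + 2 ^ j * \<bar>c\<bar> ^ j * \<bar>a n * z ^ n\<bar>"
  proof (intro exI allI impI)
    fix n :: nat
    have "\<bar>real n - c\<bar> ^ j \<le> (2 * max (real n) \<bar>c\<bar>) ^ j"
      by (intro power_mono) auto
    also have "\<dots> \<le> 2 ^ j * (real n ^ j + \<bar>c\<bar> ^ j)"
      by (auto simp: max_def power_mult_distrib)
    finally have "\<bar>real n - c\<bar> ^ j * \<bar>a n * z ^ n\<bar> \<le> 2 ^ j * (real n ^ j + \<bar>c\<bar> ^ j) * \<bar>a n * z ^ n\<bar>"
      by (rule mult_right_mono) simp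
    then show "norm \<bar>(real n - c) ^ j * a n * z ^ n\<bar>
        \<le> 2 ^ j * \<bar>real n ^ j * a n * z ^ n\<bar> + 2 ^ j * \<bar>c\<bar> ^ j * \<bar>a n * z ^ n\<bar>"
      by (simp add: abs_mult power_abs algebra_simps)
  qed
qed

lemma conv_radius_le_conv_radius_shifted_power:
  fixes a :: "nat \<Rightarrow> real"
  shows "conv_radius a \<le> conv_radius (\<lambda>n. (real n - c) ^ j * a n)"
proof (rule conv_radius_geI_ex')
  fix r :: real assume "0 < r" "ereal r < conv_radius a"
  then have "ereal \<bar>r\<bar> < conv_radius a" by simp
  then have "summable (\<lambda>n. norm ((real n - c) ^ j * a n * r ^ n))"
    unfolding real_norm_def by (rule abs_summable_shifted_power_series)
  then show "summable (\<lambda>n. (real n - c) ^ j * a n * of_real r ^ n)"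
    by (simp add: summable_norm_cancel)
qed

lemma power_series_exp_has_real_derivative:
  fixes c :: "nat \<Rightarrow> real"
  assumes "ereal (exp s) < conv_radius c"
  shows "((\<lambda>s. \<Sum>n. c n * exp s ^ n) has_real_derivative (\<Sum>n. of_nat n * c n * exp s ^ n)) (at s)"
proof -
  define x where "x = exp s"
  obtain K where K: "x < K" "ereal K < conv_radius c"
    using ereal_dense2[OF assms] by (auto simp: x_def)
  have sm: "summable (\<lambda>n. c n * z ^ n)" if "norm z < K" for z :: real
    using that by (intro summable_in_conv_radius less_trans[OF _ K(2)]) simp
  have "norm x < K" using K by (simp add: x_def)
  have "((\<lambda>z. \<Sum>n. c n * z ^ n) has_real_derivative (\<Sum>n. diffs c n * x ^ n)) (at x)"
    by (rule termdiffs_strong'[OF sm \<open>norm x < K\<close>])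
  from DERIV_chain2[OF this[unfolded x_def] DERIV_exp[of s]]
  have "((\<lambda>s. \<Sum>n. c n * exp s ^ n) has_real_derivative (\<Sum>n. diffs c n * x ^ n) * x) (at s)"
    by (simp add: x_def)
  moreover have "(\<lambda>n. of_nat n * c n * x ^ n) sums ((\<Sum>n. diffs c n * x ^ n) * x)"
  proof -
    have eq: "of_nat n * c n * x ^ (n - Suc 0) * x = of_nat n * c n * x ^ n" for n
      by (cases n) simp_all
    have "(\<lambda>n. of_nat n * c n * x ^ (n - Suc 0) * x) sums ((\<Sum>n. diffs c n * x ^ n) * x)"
      by (intro sums_mult2 diffs_equiv termdiff_converges[OF \<open>norm x < K\<close> sm])
    then show ?thesis by (simp only: eq)
  qed
  ultimately show ?thesis
    by (simp add: sums_iff x_def)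
qed

definition fulcrum_domain :: "(nat \<Rightarrow> real) \<Rightarrow> real set" where
  "fulcrum_domain a = {s. ereal (exp s) < conv_radius a}"

lemma open_fulcrum_domain: "open (fulcrum_domain a)"
  unfolding fulcrum_domain_def by (intro open_Collect_less continuous_intros)

text \<open>The factor \<open>exp (- c * s)\<close> makes differentiation in \<open>s\<close> raise \<open>j\<close> by one. For
  \<open>c = mean_f a (exp s)\<close>, dividing by \<open>exp (- c * s) * psum a (exp s)\<close> gives the \<open>j\<close>-th
  central moment of \<open>X\<^sub>t\<close> at \<open>t = exp s\<close>.\<close>

definition tilted_moment :: "(nat \<Rightarrow> real) \<Rightarrow> real \<Rightarrow> nat \<Rightarrow> real \<Rightarrow> real" where
  "tilted_moment a c j s = exp (- c * s) * (\<Sum>n. (real n - c) ^ j * a n * exp s ^ n)"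

lemma tilted_moment_has_real_derivative:
  assumes "s \<in> fulcrum_domain a"
  shows "(tilted_moment a c j has_real_derivative tilted_moment a c (Suc j) s) (at s)"
proof -
  define b where "b n = (real n - c) ^ j * a n" for n
  have conv: "ereal (exp s) < conv_radius b"
    using assms conv_radius_le_conv_radius_shifted_power[of a c j]
    by (auto simp: fulcrum_domain_def b_def)
  have sum_b: "summable (\<lambda>n. b n * exp s ^ n)"
    using conv by (intro summable_in_conv_radius) simp
  have sum_nb: "summable (\<lambda>n. of_nat n * b n * exp s ^ n)"
    using conv conv_radius_le_conv_radius_mult_of_nat[of b]
    by (intro summable_in_conv_radius) simp
  have "((\<lambda>s. exp (- c * s) * (\<Sum>n. b n * exp s ^ n)) has_real_derivative
      exp (- c * s) * (\<Sum>n. of_nat n * b n * exp s ^ n) - c * exp (- c * s) * (\<Sum>n. b n * exp s ^ n)) (at s)"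
    by (auto intro!: derivative_eq_intros power_series_exp_has_real_derivative[OF conv]
        simp: algebra_simps)
  also have "exp (- c * s) * (\<Sum>n. of_nat n * b n * exp s ^ n) - c * exp (- c * s) * (\<Sum>n. b n * exp s ^ n)
      = exp (- c * s) * ((\<Sum>n. of_nat n * b n * exp s ^ n) - (\<Sum>n. c * (b n * exp s ^ n)))"
    by (simp add: suminf_mult[OF sum_b] algebra_simps)
  also have "\<dots> = tilted_moment a c (Suc j) s"
    using sum_nb summable_mult[OF sum_b, of c]
    by (simp add: suminf_diff tilted_moment_def b_def algebra_simps)
  finally show ?thesis
    by (simp add: tilted_moment_def[abs_def] b_def)
qed

lemma psum_exp_eq_tilted_moment: "psum a (exp s) = tilted_moment a 0 0 s"
  by (simp add: psum_def tilted_moment_def)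

lemma summable_psum_exp:
  "s \<in> fulcrum_domain a \<Longrightarrow> summable (\<lambda>n. a n * exp s ^ n)"
  by (intro summable_in_conv_radius) (simp add: fulcrum_domain_def)

lemma fulcrum_domain_cases:
  fixes a :: "nat \<Rightarrow> real"
  assumes "conv_radius a > 0"
  obtains "conv_radius a = \<infinity>" "fulcrum_domain a = UNIV"
  | r where "r > 0" "conv_radius a = ereal r" "fulcrum_domain a = {..<ln r}"
proof (cases "conv_radius a")
  case (real r)
  with assms have "r > 0" by simp
  then have "exp s < r \<longleftrightarrow> s < ln r" for s
    by (metis exp_less_cancel_iff exp_ln)
  with real \<open>r > 0\<close> show ?thesis
    by (intro that(2)[of r]) (auto simp: fulcrum_domain_def)
qed (use assms that(1) in \<open>auto simp: fulcrum_domain_def\<close>)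

lemma eventually_in_fulcrum_domain:
  fixes a :: "nat \<Rightarrow> real"
  assumes "conv_radius a > 0"
  shows "eventually (\<lambda>s. s \<in> fulcrum_domain a) (up_to_lnR (conv_radius a))"
  using assms
proof (cases rule: fulcrum_domain_cases)
  case (2 r)
  have "eventually (\<lambda>s. s \<in> {ln r - 1<..<ln r}) (at_left (ln r))"
    by (rule eventually_at_left_real) simp
  with 2 show ?thesis by (auto simp: up_to_lnR_def elim!: eventually_mono)
qed (simp add: up_to_lnR_def)

lemma filterlim_exp_up_to_R:
  fixes a :: "nat \<Rightarrow> real"
  assumes "conv_radius a > 0"
  shows "filterlim exp (up_to_R (conv_radius a)) (up_to_lnR (conv_radius a))"
  using assms
proof (cases rule: fulcrum_domain_cases)
  case 1
  then show ?thesis by (simp add: up_to_R_def up_to_lnR_def exp_at_top)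
next
  case (2 r)
  have "(exp \<longlongrightarrow> exp (ln r)) (at_left (ln r))"
    by (intro tendsto_intros)
  then have "(exp \<longlongrightarrow> r) (at_left (ln r))"
    using \<open>r > 0\<close> by simp
  moreover have "eventually (\<lambda>s. s \<in> {ln r - 1<..<ln r}) (at_left (ln r))"
    by (rule eventually_at_left_real) simp
  then have "eventually (\<lambda>s. exp s < r) (at_left (ln r))"
    using \<open>r > 0\<close> by (auto elim!: eventually_mono) (metis exp_less_cancel_iff exp_ln)
  ultimately show ?thesis
    using 2 by (simp add: up_to_R_def up_to_lnR_def tendsto_imp_filterlim_at_left)
qed

lemma tendsto_up_to_lnR_sequentially:
  fixes a :: "nat \<Rightarrow> real" and f :: "real \<Rightarrow> real"
  assumes "conv_radius a > 0"
    and lim: "\<And>X. (\<And>i. X i \<in> fulcrum_domain a) \<Longrightarrow> filterlim X (up_to_lnR (conv_radius a)) sequentially \<Longrightarrow>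
      (\<lambda>i. f (X i)) \<longlonglongrightarrow> l"
  shows "(f \<longlongrightarrow> l) (up_to_lnR (conv_radius a))"
  using assms(1)
proof (cases rule: fulcrum_domain_cases)
  case 1
  then show ?thesis using lim by (auto simp: up_to_lnR_def intro!: tendsto_at_topI_sequentially)
next
  case (2 r)
  then have filter: "up_to_lnR (conv_radius a) = at_left (ln r)"
    by (simp add: up_to_lnR_def)
  show ?thesis
    unfolding filter
  proof (rule tendsto_at_left_sequentially[of "ln r - 1"])
    fix S :: "nat \<Rightarrow> real"
    assume "\<And>n. S n < ln r" "S \<longlonglongrightarrow> ln r"
    moreover from this have "filterlim S (at_left (ln r)) sequentially"
      by (intro tendsto_imp_filterlim_at_left) auto
    ultimately show "(\<lambda>n. f (S n)) \<longlonglongrightarrow> l"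
      using lim[of S] 2 filter by simp
  qed simp
qed

section \<open>Moments and cumulants of \<open>X\<^sub>t\<close>\<close>

definition central_moment :: "(nat \<Rightarrow> real) \<Rightarrow> nat \<Rightarrow> real \<Rightarrow> real" where
  "central_moment a j s =
     (\<Sum>n. (real n - mean_f a (exp s)) ^ j * a n * exp s ^ n) / psum a (exp s)"

definition std_moment :: "(nat \<Rightarrow> real) \<Rightarrow> nat \<Rightarrow> real \<Rightarrow> real" where
  "std_moment a k s = central_moment a k s / sqrt (var_f a (exp s)) ^ k"

text \<open>\<open>(deriv ^^ j) (fulcrum a) s\<close> is the \<open>j\<close>-th cumulant of \<open>X\<^sub>t\<close> at \<open>t = exp s\<close>.\<close>

definition std_cumulant :: "(nat \<Rightarrow> real) \<Rightarrow> nat \<Rightarrow> real \<Rightarrow> real" where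
  "std_cumulant a j s = (deriv ^^ j) (fulcrum a) s / ((deriv ^^ 2) (fulcrum a) s) powr (real j / 2)"

locale classK_series =
  fixes a :: "nat \<Rightarrow> real"
  assumes classK: "classK a"
begin

lemma coeff_nonneg: "a n \<ge> 0"
  using classK by (simp add: classK_def)

lemma coeff_0_pos: "a 0 > 0"
  using classK by (simp add: classK_def)

lemma conv_radius_pos: "conv_radius a > 0"
  using classK by (simp add: classK_def)

lemma psum_exp_pos: "s \<in> fulcrum_domain a \<Longrightarrow> psum a (exp s) > 0"
  unfolding psum_def
  by (rule suminf_pos2[of _ 0]) (use summable_psum_exp coeff_nonneg coeff_0_pos in auto)

lemma fulcrum_eq: "fulcrum a = (\<lambda>s. ln (tilted_moment a 0 0 s))"
  by (simp add: fun_eq_iff fulcrum_def psum_exp_eq_tilted_moment)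

lemma higher_differentiable_on_fulcrum: "higher_differentiable_on k (fulcrum_domain a) (fulcrum a)"
  unfolding fulcrum_eq
  by (intro higher_differentiable_on_ln open_fulcrum_domain
      higher_differentiable_on_derivative_sequence tilted_moment_has_real_derivative)
     (simp_all add: psum_exp_pos flip: psum_exp_eq_tilted_moment)

lemma fulcrum_higher_deriv_has_real_derivative:
  "s \<in> fulcrum_domain a \<Longrightarrow>
     ((deriv ^^ k) (fulcrum a) has_real_derivative (deriv ^^ Suc k) (fulcrum a) s) (at s)"
  by (rule has_real_derivative_higher_deriv[OF higher_differentiable_on_fulcrum])

lemma fulcrum_deriv_eq_mean:
  assumes "s \<in> fulcrum_domain a"
  shows "(deriv ^^ Suc 0) (fulcrum a) s = mean_f a (exp s)"
proof -
  have "tilted_moment a 0 0 s > 0"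
    using psum_exp_pos[OF assms] by (simp add: psum_exp_eq_tilted_moment)
  then have "(fulcrum a has_real_derivative tilted_moment a 0 1 s / tilted_moment a 0 0 s) (at s)"
    unfolding fulcrum_eq
    by (auto intro!: derivative_eq_intros tilted_moment_has_real_derivative[OF assms]
        simp: field_simps)
  then show ?thesis
    by (simp add: DERIV_imp_deriv mean_f_def tilted_moment_def psum_def)
qed

text \<open>Leibniz's rule applied to \<open>tilted_moment a c 1 = (F' - c) \<cdot> tilted_moment a c 0\<close>,
  which holds because \<open>tilted_moment a c 0 = exp (F - c s)\<close>.\<close>

lemma tilted_moment_Suc:
  assumes s: "s \<in> fulcrum_domain a"
  shows "tilted_moment a c (Suc k) s = (\<Sum>i\<le>k. real (k choose i)
    * ((deriv ^^ Suc i) (fulcrum a) s - (if i = 0 then c else 0)) * tilted_moment a c (k - i) s)"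
proof -
  define F where "F = fulcrum a"
  define A where "A i y = (deriv ^^ Suc i) F y - (if i = 0 then c else 0)" for i y
  have dA: "(A i has_real_derivative A (Suc i) y) (at y)" if "y \<in> fulcrum_domain a" for i y
    using fulcrum_higher_deriv_has_real_derivative[OF that, of "Suc i"]
    by (auto intro!: derivative_eq_intros simp: A_def[abs_def] F_def)
  have dT: "(tilted_moment a c i has_real_derivative tilted_moment a c (Suc i) y) (at y)"
    if "y \<in> fulcrum_domain a" for i y
    using that by (rule tilted_moment_has_real_derivative)
  have T0: "tilted_moment a c 0 y = exp (F y - c * y)" if "y \<in> fulcrum_domain a" for y
    using psum_exp_pos[OF that]
    by (simp add: tilted_moment_def F_def fulcrum_def psum_def exp_diff exp_minus field_simps)
  have T1: "tilted_moment a c (Suc 0) y = A 0 y * tilted_moment a c 0 y"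
    if y: "y \<in> fulcrum_domain a" for y
  proof -
    have "((\<lambda>y. exp (F y - c * y)) has_real_derivative exp (F y - c * y) * A 0 y) (at y)"
      using fulcrum_higher_deriv_has_real_derivative[OF y, of 0]
      by (auto intro!: derivative_eq_intros simp: A_def F_def)
    then have "(tilted_moment a c 0 has_real_derivative exp (F y - c * y) * A 0 y) (at y)"
      by (rule has_field_derivative_transform_within_open[OF _ open_fulcrum_domain y]) (simp add: T0)
    with dT[OF y, of 0] show ?thesis
      by (simp add: DERIV_unique T0[OF y] mult.commute)
  qed
  show ?thesis
    using Leibniz_derivative_sequence[where A = A and B = "tilted_moment a c"
        and C = "\<lambda>j. tilted_moment a c (Suc j)", OF open_fulcrum_domain s dA dT dT T1]
    by (simp add: A_def F_def)
qed

lemma central_moment_Suc: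
  assumes s: "s \<in> fulcrum_domain a"
  shows "central_moment a (Suc k) s =
    (\<Sum>i=1..k. real (k choose i) * (deriv ^^ Suc i) (fulcrum a) s * central_moment a (k - i) s)"
proof -
  define m where "m = mean_f a (exp s)"
  define E where "E = exp (- m * s) * psum a (exp s)"
  have "E > 0" using psum_exp_pos[OF s] by (simp add: E_def)
  have T: "tilted_moment a m j s = E * central_moment a j s" for j
    using psum_exp_pos[OF s] by (simp add: tilted_moment_def central_moment_def psum_def m_def E_def)
  have "E * central_moment a (Suc k) s = (\<Sum>i\<le>k. real (k choose i)
      * ((deriv ^^ Suc i) (fulcrum a) s - (if i = 0 then m else 0)) * (E * central_moment a (k - i) s))"
    using tilted_moment_Suc[OF s, of m k] by (simp only: T)
  also have "\<dots> = (\<Sum>i=1..k. real (k choose i)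
      * ((deriv ^^ Suc i) (fulcrum a) s - (if i = 0 then m else 0)) * (E * central_moment a (k - i) s))"
    using fulcrum_deriv_eq_mean[OF s] by (simp add: atMost_atLeast0 sum.atLeast_Suc_atMost m_def)
  also have "\<dots> = E * (\<Sum>i=1..k. real (k choose i) * (deriv ^^ Suc i) (fulcrum a) s
      * central_moment a (k - i) s)"
    by (auto simp: sum_distrib_left intro!: sum.cong)
  finally show ?thesis
    using \<open>E > 0\<close> by simp
qed

lemma central_moment_0:
  assumes "s \<in> fulcrum_domain a"
  shows "central_moment a 0 s = 1"
  using psum_exp_pos[OF assms] by (simp add: central_moment_def psum_def)

lemma var_eq_central_moment: "var_f a (exp s) = central_moment a 2 s"
  by (simp add: var_f_def central_moment_def)

lemma fulcrum_deriv2_eq_var: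
  "s \<in> fulcrum_domain a \<Longrightarrow> (deriv ^^ 2) (fulcrum a) s = var_f a (exp s)"
  using central_moment_Suc[of s 1] by (simp add: var_eq_central_moment central_moment_0 numeral_2_eq_2)

lemma var_pos:
  assumes s: "s \<in> fulcrum_domain a"
  shows "var_f a (exp s) > 0"
proof -
  define m where "m = mean_f a (exp s)"
  obtain n0 where "n0 > 0" "a n0 \<noteq> 0"
    using classK by (auto simp: classK_def)
  have "ereal (exp s) < conv_radius (\<lambda>n. (real n - m) ^ 2 * a n)"
    using s conv_radius_le_conv_radius_shifted_power[of a m 2]
    by (auto simp: fulcrum_domain_def intro: less_le_trans)
  then have "summable (\<lambda>n. (real n - m) ^ 2 * a n * exp s ^ n)"
    by (intro summable_in_conv_radius) simp
  moreover have "(real n - m) ^ 2 * a n * exp s ^ n \<ge> 0" for n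
    using coeff_nonneg[of n] by simp
  moreover obtain i where "(real i - m) ^ 2 * a i * exp s ^ i > 0"
  proof (cases "m = 0")
    case True
    have "a n0 > 0" using coeff_nonneg[of n0] \<open>a n0 \<noteq> 0\<close> by simp
    with True \<open>n0 > 0\<close> that[of n0] show ?thesis by simp
  next
    case False
    with coeff_0_pos that[of 0] show ?thesis by simp
  qed
  ultimately have "(\<Sum>n. (real n - m) ^ 2 * a n * exp s ^ n) > 0"
    by (rule suminf_pos2)
  then show ?thesis
    using psum_exp_pos[OF s] by (simp add: var_f_def m_def)
qed

lemma std_cumulant_eq:
  assumes "s \<in> fulcrum_domain a"
  shows "std_cumulant a j s = (deriv ^^ j) (fulcrum a) s / sqrt (var_f a (exp s)) ^ j"
proof -
  have "sqrt (var_f a (exp s)) ^ j = (var_f a (exp s) powr (1 / 2)) ^ j"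
    using var_pos[OF assms] by (simp add: powr_half_sqrt)
  also have "\<dots> = var_f a (exp s) powr (real j / 2)"
    using var_pos[OF assms] by (simp add: powr_power)
  finally have "var_f a (exp s) powr (real j / 2) = sqrt (var_f a (exp s)) ^ j" ..
  then show ?thesis
    by (simp add: std_cumulant_def fulcrum_deriv2_eq_var[OF assms])
qed

lemma std_cumulant_2:
  assumes "s \<in> fulcrum_domain a"
  shows "std_cumulant a 2 s = 1"
  using var_pos[OF assms] by (simp add: std_cumulant_eq[OF assms] fulcrum_deriv2_eq_var[OF assms])

lemma std_moment_0: "s \<in> fulcrum_domain a \<Longrightarrow> std_moment a 0 s = 1"
  by (simp add: std_moment_def central_moment_0)

lemma std_moment_Suc:
  assumes s: "s \<in> fulcrum_domain a"
  shows "std_moment a (Suc k) s =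
    (\<Sum>i=1..k. real (k choose i) * std_cumulant a (Suc i) s * std_moment a (k - i) s)"
proof -
  define \<sigma> where "\<sigma> = sqrt (var_f a (exp s))"
  have "\<sigma> > 0" using var_pos[OF s] by (simp add: \<sigma>_def)
  have "std_moment a (Suc k) s = (\<Sum>i=1..k. real (k choose i) * (deriv ^^ Suc i) (fulcrum a) s
      * central_moment a (k - i) s / \<sigma> ^ Suc k)"
    by (simp add: std_moment_def central_moment_Suc[OF s] sum_divide_distrib \<sigma>_def)
  also have "\<dots> = (\<Sum>i=1..k. real (k choose i) * std_cumulant a (Suc i) s * std_moment a (k - i) s)"
  proof (rule sum.cong[OF refl])
    fix i assume "i \<in> {1..k}"
    then have "\<sigma> ^ Suc k = \<sigma> ^ Suc i * \<sigma> ^ (k - i)" by (simp flip: power_add)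
    then show "real (k choose i) * (deriv ^^ Suc i) (fulcrum a) s * central_moment a (k - i) s / \<sigma> ^ Suc k
        = real (k choose i) * std_cumulant a (Suc i) s * std_moment a (k - i) s"
      using \<open>\<sigma> > 0\<close> by (simp only:) (simp add: std_moment_def std_cumulant_eq[OF s] flip: \<sigma>_def)
  qed
  finally show ?thesis .
qed

end

definition weight :: "(nat \<Rightarrow> real) \<Rightarrow> real \<Rightarrow> nat \<Rightarrow> real" where
  "weight a s n = a n * exp s ^ n / psum a (exp s)"

definition standardize :: "(nat \<Rightarrow> real) \<Rightarrow> real \<Rightarrow> nat \<Rightarrow> real" where
  "standardize a s n = (real n - mean_f a (exp s)) / sqrt (var_f a (exp s))"

text \<open>The law of the standardized variable \<open>(X\<^sub>t - m\<^sub>f(t)) / \<sigma>\<^sub>f(t)\<close> at \<open>t = exp s\<close>.\<close>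

definition std_distr :: "(nat \<Rightarrow> real) \<Rightarrow> real \<Rightarrow> real measure" where
  "std_distr a s = distr (density (count_space UNIV) (\<lambda>n. ennreal (weight a s n))) borel (standardize a s)"

context classK_series
begin

lemma weight_nonneg:
  assumes "s \<in> fulcrum_domain a"
  shows "weight a s n \<ge> 0"
  using psum_exp_pos[OF assms] coeff_nonneg[of n] by (simp add: weight_def)

lemma weight_sums:
  assumes "s \<in> fulcrum_domain a"
  shows "weight a s sums 1"
proof -
  have "(\<lambda>n. a n * exp s ^ n / psum a (exp s)) sums (psum a (exp s) / psum a (exp s))"
    using summable_psum_exp[OF assms] unfolding psum_def by (intro sums_divide summable_sums)
  then show ?thesis
    using psum_exp_pos[OF assms] by (simp add: weight_def[abs_def])
qed

lemma real_distribution_std_distr: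
  assumes "s \<in> fulcrum_domain a"
  shows "real_distribution (std_distr a s)"
proof -
  have "emeasure (density (count_space UNIV) (\<lambda>n. ennreal (weight a s n))) UNIV
      = (\<Sum>n. ennreal (weight a s n))"
    by (simp add: emeasure_density nn_integral_count_space_nat)
  also have "\<dots> = ennreal (\<Sum>n. weight a s n)"
    using weight_sums[OF assms] weight_nonneg[OF assms]
    by (intro suminf_ennreal2) (auto simp: sums_iff)
  also have "\<dots> = 1"
    using weight_sums[OF assms] by (simp add: sums_iff)
  finally have "prob_space (density (count_space UNIV) (\<lambda>n. ennreal (weight a s n)))"
    by (intro prob_spaceI) simp
  then have "prob_space (std_distr a s)"
    unfolding std_distr_def by (rule prob_space.prob_space_distr) simp
  then show ?thesis
    by (simp add: real_distribution_def real_distribution_axioms_def std_distr_def)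
qed

lemma integral_std_distr:
  assumes s: "s \<in> fulcrum_domain a" and f: "f \<in> borel_measurable borel"
    and summable: "summable (\<lambda>n. weight a s n * \<bar>f (standardize a s n)\<bar>)"
  shows "integrable (std_distr a s) f"
    and "integral\<^sup>L (std_distr a s) f = (\<Sum>n. weight a s n * f (standardize a s n))"
proof -
  have meas: "standardize a s \<in> density (count_space UNIV) (\<lambda>n. ennreal (weight a s n)) \<rightarrow>\<^sub>M borel"
    by simp
  have int: "integrable (count_space UNIV) (\<lambda>n. weight a s n * f (standardize a s n))"
    unfolding integrable_count_space_nat_iff
    using summable weight_nonneg[OF s] by (simp add: abs_mult)
  show "integrable (std_distr a s) f"
    unfolding std_distr_def
    by (subst integrable_distr_eq[OF meas f], subst integrable_density)
       (use int weight_nonneg[OF s] in auto)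
  show "integral\<^sup>L (std_distr a s) f = (\<Sum>n. weight a s n * f (standardize a s n))"
    unfolding std_distr_def using int weight_nonneg[OF s]
    by (simp add: integral_distr[OF meas f] integral_density integral_count_space_nat)
qed

lemma cdf_std_distr:
  assumes s: "s \<in> fulcrum_domain a"
  shows "cdf (std_distr a s) x = cdf_normalized a (exp s) x"
proof -
  have summable: "summable (\<lambda>n. weight a s n * \<bar>indicator {..x} (standardize a s n) :: real\<bar>)"
    by (rule summable_comparison_test[OF _ sums_summable[OF weight_sums[OF s]]])
       (auto simp: weight_nonneg[OF s] indicator_def)
  have "cdf (std_distr a s) x = integral\<^sup>L (std_distr a s) (indicator {..x})"
    using real_distribution_std_distr[OF s]
    by (simp add: cdf_def real_distribution_def real_distribution_axioms_def)
  also have "\<dots> = (\<Sum>n. weight a s n * indicator {..x} (standardize a s n))"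
    by (rule integral_std_distr(2)[OF s _ summable]) simp
  also have "\<dots> = (\<Sum>n. (if standardize a s n \<le> x then a n * exp s ^ n else 0) / psum a (exp s))"
    by (intro arg_cong[where f = suminf] ext) (simp add: weight_def indicator_def)
  also have "\<dots> = (\<Sum>n. if standardize a s n \<le> x then a n * exp s ^ n else 0) / psum a (exp s)"
    by (intro suminf_divide summable_comparison_test[OF _ summable_psum_exp[OF s]])
       (auto simp: coeff_nonneg)
  finally show ?thesis
    by (simp add: cdf_normalized_def standardize_def)
qed

lemma std_distr_moment:
  assumes s: "s \<in> fulcrum_domain a"
  shows "integrable (std_distr a s) (\<lambda>x. x ^ k)"
    and "integral\<^sup>L (std_distr a s) (\<lambda>x. x ^ k) = std_moment a k s"
proof -
  define m where "m = mean_f a (exp s)"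
  define d where "d = psum a (exp s) * sqrt (var_f a (exp s)) ^ k"
  have "summable (\<lambda>n. \<bar>(real n - m) ^ k * a n * exp s ^ n\<bar> / d)"
    using s by (intro summable_divide abs_summable_shifted_power_series) (simp add: fulcrum_domain_def)
  moreover have "weight a s n * \<bar>standardize a s n ^ k\<bar> = \<bar>(real n - m) ^ k * a n * exp s ^ n\<bar> / d" for n
    using psum_exp_pos[OF s] var_pos[OF s] coeff_nonneg[of n]
    by (simp add: weight_def standardize_def m_def d_def abs_mult power_abs power_divide)
  ultimately have summable: "summable (\<lambda>n. weight a s n * \<bar>standardize a s n ^ k\<bar>)"
    by simp
  show "integrable (std_distr a s) (\<lambda>x. x ^ k)"
    by (rule integral_std_distr(1)[OF s _ summable]) simp
  have "integral\<^sup>L (std_distr a s) (\<lambda>x. x ^ k) = (\<Sum>n. weight a s n * standardize a s n ^ k)"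
    by (rule integral_std_distr(2)[OF s _ summable]) simp
  also have "\<dots> = (\<Sum>n. (real n - m) ^ k * a n * exp s ^ n / d)"
    by (simp add: weight_def standardize_def m_def d_def power_divide ac_simps)
  also have "\<dots> = std_moment a k s"
    using s conv_radius_le_conv_radius_shifted_power[of a m k]
    by (subst suminf_divide)
       (auto simp: std_moment_def central_moment_def m_def d_def fulcrum_domain_def
          intro!: summable_in_conv_radius intro: less_le_trans)
  finally show "integral\<^sup>L (std_distr a s) (\<lambda>x. x ^ k) = std_moment a k s" .
qed

end

context classK_series
begin

lemma Bfun_std_moment:
  assumes cumulants: "\<And>j. 3 \<le> j \<Longrightarrow> j \<le> n \<Longrightarrow> Bfun (std_cumulant a j) (up_to_lnR (conv_radius a))"
    and "k \<le> n"
  shows "Bfun (std_moment a k) (up_to_lnR (conv_radius a))"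
  using \<open>k \<le> n\<close>
proof (induction k rule: less_induct)
  case (less k)
  note domain = eventually_in_fulcrum_domain[OF conv_radius_pos]
  show ?case
  proof (cases k)
    case 0
    from domain have "eventually (\<lambda>s. 1 = std_moment a k s) (up_to_lnR (conv_radius a))"
      by eventually_elim (simp add: 0 std_moment_0)
    then show ?thesis by (rule Bfun_transform_eventually[OF Bfun_const])
  next
    case (Suc k')
    have "Bfun (std_cumulant a (Suc i)) (up_to_lnR (conv_radius a))" if "i \<in> {1..k'}" for i
    proof (cases "i = 1")
      case True
      then have "Suc i = 2" by simp
      from domain have "eventually (\<lambda>s. 1 = std_cumulant a (Suc i) s) (up_to_lnR (conv_radius a))"
        by eventually_elim (simp only: \<open>Suc i = 2\<close> std_cumulant_2)
      then show ?thesis by (rule Bfun_transform_eventually[OF Bfun_const])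
    next
      case False
      with that less.prems Suc show ?thesis by (intro cumulants) auto
    qed
    moreover have "Bfun (std_moment a (k' - i)) (up_to_lnR (conv_radius a))" if "i \<in> {1..k'}" for i
      using that less.prems Suc by (intro less.IH) auto
    ultimately have "Bfun (\<lambda>s. \<Sum>i=1..k'. real (k' choose i) * std_cumulant a (Suc i) s
        * std_moment a (k' - i) s) (up_to_lnR (conv_radius a))"
      by (auto intro!: Bfun_sum Bfun_mult)
    moreover from domain have "eventually (\<lambda>s. (\<Sum>i=1..k'. real (k' choose i) * std_cumulant a (Suc i) s
        * std_moment a (k' - i) s) = std_moment a k s) (up_to_lnR (conv_radius a))"
      by eventually_elim (simp add: Suc std_moment_Suc)
    ultimately show ?thesis by (rule Bfun_transform_eventually)
  qed
qed

lemma std_moment_tendsto_std_normal_moment: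
  assumes "gaussian a" "even n" "Bfun (std_moment a n) (up_to_lnR (conv_radius a))" "k < n"
  shows "(std_moment a k \<longlongrightarrow> integral\<^sup>L std_normal_distribution (\<lambda>x. x ^ k)) (up_to_lnR (conv_radius a))"
proof (rule tendsto_up_to_lnR_sequentially[OF conv_radius_pos])
  fix X assume X_domain: "\<And>i. X i \<in> fulcrum_domain a"
    and X: "filterlim X (up_to_lnR (conv_radius a)) sequentially"
  define M where "M i = std_distr a (X i)" for i
  have "weak_conv_m M std_normal_distribution"
    unfolding weak_conv_m_def weak_conv_def
  proof (intro allI impI)
    fix x
    have "((\<lambda>t. cdf_normalized a t x) \<longlongrightarrow> Phi x) (up_to_R (conv_radius a))"
      using \<open>gaussian a\<close> by (simp add: gaussian_def)
    then have "(\<lambda>i. cdf_normalized a (exp (X i)) x) \<longlonglongrightarrow> Phi x"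
      by (rule filterlim_compose[OF _ filterlim_compose[OF filterlim_exp_up_to_R[OF conv_radius_pos] X]])
    then show "(\<lambda>i. cdf (M i) x) \<longlonglongrightarrow> cdf std_normal_distribution x"
      by (simp add: M_def cdf_std_distr[OF X_domain] cdf_std_normal_distribution)
  qed
  moreover obtain B where "eventually (\<lambda>s. norm (std_moment a n s) \<le> B) (up_to_lnR (conv_radius a))"
    using \<open>Bfun (std_moment a n) _\<close> by (auto elim: BfunE)
  from eventually_compose_filterlim[OF this X]
  have "eventually (\<lambda>i. integral\<^sup>L (M i) (\<lambda>x. x ^ n) \<le> B) sequentially"
    by eventually_elim (simp add: M_def std_distr_moment(2)[OF X_domain])
  ultimately have "(\<lambda>i. integral\<^sup>L (M i) (\<lambda>x. x ^ k)) \<longlonglongrightarrow> integral\<^sup>L std_normal_distribution (\<lambda>x. x ^ k)"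
    using real_distribution_std_distr[OF X_domain] std_distr_moment(1)[OF X_domain] assms(2,4)
    by (intro weak_conv_imp_moment_conv[of M std_normal_distribution n k B])
       (auto simp: M_def real_dist_normal_dist integrable_std_normal_distribution_moment)
  then show "(\<lambda>i. std_moment a k (X i)) \<longlonglongrightarrow> integral\<^sup>L std_normal_distribution (\<lambda>x. x ^ k)"
    by (simp add: M_def std_distr_moment(2)[OF X_domain])
qed

lemma std_cumulant_eq_moment_recursion:
  assumes s: "s \<in> fulcrum_domain a" and "2 \<le> k"
  shows "std_cumulant a (Suc k) s = std_moment a (Suc k) s - real k * std_moment a (k - 1) s
    - (\<Sum>i\<in>{2..<k}. real (k choose i) * std_cumulant a (Suc i) s * std_moment a (k - i) s)"
proof -
  have "{1..k} = insert 1 (insert k {2..<k})"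
    using \<open>2 \<le> k\<close> by auto
  then have split: "(\<Sum>i=1..k. g i) = g 1 + (\<Sum>i=2..<k. g i) + g k" for g :: "nat \<Rightarrow> real"
    using \<open>2 \<le> k\<close> by (simp add: ac_simps)
  show ?thesis
    unfolding std_moment_Suc[OF s, of k] split
    by (simp add: std_cumulant_2[OF s, unfolded numeral_2_eq_2] std_moment_0[OF s] numeral_2_eq_2)
qed

text \<open>The normal moments satisfy the moment recursion with all cumulants beyond the second
  equal to zero.\<close>

lemma std_cumulant_tendsto_0:
  assumes moments: "\<And>k. k < n \<Longrightarrow>
      (std_moment a k \<longlongrightarrow> integral\<^sup>L std_normal_distribution (\<lambda>x. x ^ k)) (up_to_lnR (conv_radius a))"
    and "3 \<le> j" "j < n"
  shows "(std_cumulant a j \<longlongrightarrow> 0) (up_to_lnR (conv_radius a))"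
  using assms(2,3)
proof (induction j rule: less_induct)
  case (less j)
  define k where "k = j - 1"
  have j: "j = Suc k" and "2 \<le> k" using less.prems by (auto simp: k_def)
  let ?z = "\<lambda>k. integral\<^sup>L std_normal_distribution (\<lambda>x::real. x ^ k)"
  let ?rest = "\<lambda>s. \<Sum>i\<in>{2..<k}. real (k choose i) * std_cumulant a (Suc i) s * std_moment a (k - i) s"
  have "(?rest \<longlongrightarrow> 0) (up_to_lnR (conv_radius a))"
  proof (rule tendsto_null_sum)
    fix i assume "i \<in> {2..<k}"
    with less.prems j have "(std_cumulant a (Suc i) \<longlongrightarrow> 0) (up_to_lnR (conv_radius a))"
      "(std_moment a (k - i) \<longlongrightarrow> ?z (k - i)) (up_to_lnR (conv_radius a))"
      by (auto intro: less.IH moments)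
    then show "((\<lambda>s. real (k choose i) * std_cumulant a (Suc i) s * std_moment a (k - i) s) \<longlongrightarrow> 0)
        (up_to_lnR (conv_radius a))"
      by (auto intro: tendsto_mult_zero tendsto_mult_right_zero tendsto_eq_intros)
  qed
  then have "((\<lambda>s. std_moment a j s - real k * std_moment a (k - 1) s - ?rest s)
      \<longlongrightarrow> ?z j - real k * ?z (k - 1) - 0) (up_to_lnR (conv_radius a))"
    using less.prems j by (intro tendsto_diff tendsto_mult tendsto_const moments) auto
  moreover have "?z j = real k * ?z (k - 1)"
    unfolding j using \<open>2 \<le> k\<close> by (intro std_normal_moment_Suc) simp
  moreover have "eventually (\<lambda>s. std_moment a j s - real k * std_moment a (k - 1) s - ?rest s
      = std_cumulant a j s) (up_to_lnR (conv_radius a))"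
    using eventually_in_fulcrum_domain[OF conv_radius_pos]
    by eventually_elim (simp add: j std_cumulant_eq_moment_recursion \<open>2 \<le> k\<close>)
  ultimately show ?case
    by (simp add: Lim_transform_eventually)
qed

end

theorem theorem3p3:
  fixes a :: "nat \<Rightarrow> real" and n :: nat
  assumes "classK a"
    and "gaussian a"
    and "even n" and "n \<ge> 4"
    and "\<forall>j. 3 \<le> j \<and> j \<le> n \<longrightarrow>
           Limsup (up_to_lnR (conv_radius a))
             (\<lambda>s. ereal (\<bar>(deriv ^^ j) (fulcrum a) s\<bar> / ((deriv ^^ 2) (fulcrum a) s) powr (real j / 2)))
           < \<infinity>"
  shows "\<forall>j. 3 \<le> j \<and> j < n \<longrightarrow>
           ((\<lambda>s. (deriv ^^ j) (fulcrum a) s / ((deriv ^^ 2) (fulcrum a) s) powr (real j / 2))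
             \<longlongrightarrow> 0) (up_to_lnR (conv_radius a))"
proof -
  interpret classK_series a by unfold_locales fact
  have "Bfun (std_cumulant a j) (up_to_lnR (conv_radius a))" if "3 \<le> j" "j \<le> n" for j
    using assms(5) that
    by (intro Bfun_if_Limsup_abs_less_infinity) (simp add: std_cumulant_def abs_divide)
  then have "Bfun (std_moment a n) (up_to_lnR (conv_radius a))"
    by (rule Bfun_std_moment[OF _ order_refl])
  then have "(std_moment a k \<longlongrightarrow> integral\<^sup>L std_normal_distribution (\<lambda>x. x ^ k))
      (up_to_lnR (conv_radius a))" if "k < n" for k
    using assms(2,3) that by (intro std_moment_tendsto_std_normal_moment)
  then show ?thesis
    using std_cumulant_tendsto_0 by (auto simp: std_cumulant_def[abs_def])
qed

end
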